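(* For every $\epsilon\in(0,1)$ there is an instance consisting of $E=\{e_1,e_2,e_3\}$, $O=\{o_1,o_2\}$, a prior $p$ whose support is $U^+=\{\phi_1,\phi_2,\phi_3\}$ with $\phi_i(e_i)=o_1$ and $\phi_i(e_j)=o_2$ for $j\ne i$, and the utility $f(S,\phi)=\epsilon\cdot\mathbf 1[e_1\in S]+\sum_{i\in\{2,3\}}\mathbf 1[e_i\in S]\,\mathbf 1[\phi(e_i)=o_2]$, such that: $f$ is pointwise monotone and pointwise submodular, worst-case monotone, and satisfies minimal dependency; yet for cardinality $k=2$ the adaptive worst-case greedy policy $\pi^g$ (with any tie-breaking) satisfies $f_{wc}(\pi^g)=\epsilon$, while $f_{wc}(\pi^*_{wc})=1$ for an optimal policy $\pi^*_{wc}$ among policies selecting at most $2$ items. In particular, pointwise submodularity together with worst-case monotonicity and minimal dependency does not imply worst-case submodularity, and under these hypotheses the approximation ratio of $\pi^g$ can be arbitrarily close to $0$.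
   Context: Setting. $E$ is a finite set of items, $O$ a finite set of states, a realization is $\phi:E\to O$, $p$ a prior on realizations, $\Phi\sim p$, $U^+=\{\phi:p(\phi)>0\}$. A partial realization is $\psi:S\to O$, $S=\mathrm{dom}(\psi)\subseteq E$, identified with its set of pairs; $\phi\sim\psi$ means $\phi$ agrees with $\psi$ on $\mathrm{dom}(\psi)$; only $\psi$ with $\Pr[\Phi\sim\psi]>0$ are considered and $p(\phi\mid\psi)=\Pr[\Phi=\phi\mid\Phi\sim\psi]$. $f(S,\psi)=\mathbb{E}[f(S,\Phi)\mid\Phi\sim\psi]$. For $e\notin\mathrm{dom}(\psi)$, $O(e,\psi)=\{o:\exists\phi,\ p(\phi\mid\psi)>0,\ \phi(e)=o\}$ and $f_{wc}(e\mid\psi)=\min_{o\in O(e,\psi)}\{f(\mathrm{dom}(\psi)\cup\{e\},\psi\cup\{(e,o)\})-f(\mathrm{dom}(\psi),\psi)\}$. $f$ is worst-case submodular if $f_{wc}(e\mid\psi)\ge f_{wc}(e\mid\psi')$ for all $\psi\subseteq\psi'$ and $e\notin\mathrm{dom}(\psi')$; worst-case monotone if $f_{wc}(e\mid\psi)\ge0$ always. $f$ satisfies minimal dependency if $f(\mathrm{dom}(\psi),\psi)=f(\mathrm{dom}(\psi),\phi)$ for all $\psi$ and $\phi\in U^+$ with $\phi\sim\psi$. $f$ is pointwise submodular (resp. pointwise monotone) if for each $\phi\in U^+$ the set function $S\mapsto f(S,\phi)$ is submodular (resp. monotone nondecreasing). A (deterministic) policy, given the current observed partial realization, selects a new item or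 stops; $E(\pi,\phi)$ is the set it selects under $\phi$, and $f_{wc}(\pi)=\min_{\phi\in U^+}f(E(\pi,\phi),\phi)$. The adaptive worst-case greedy policy $\pi^g$ for cardinality $k$: with $\psi_0=\emptyset$, for $t=1,\dots,k$ select $e_t\in\arg\max_{e\in E\setminus\mathrm{dom}(\psi_{t-1})}f_{wc}(e\mid\psi_{t-1})$, observe its state and set $\psi_t=\psi_{t-1}\cup\{(e_t,\Phi(e_t))\}$. $\pi^*_{wc}$ maximizes $f_{wc}(\pi)$ over policies with $|E(\pi,\phi)|\le k$ for all $\phi\in U^+$. *)

theory Defs
  imports Complex_Main
begin

section \<open>General framework (E = UNIV of a finite type of items, O = UNIV of a finite type of states)\<close>

type_synonym ('e, 'o) realization = "'e \<Rightarrow> 'o"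
type_synonym ('e, 'o) partial = "'e \<rightharpoonup> 'o"
type_synonym ('e, 'o) utility = "'e set \<Rightarrow> ('e \<Rightarrow> 'o) \<Rightarrow> real"
type_synonym ('e, 'o) policy = "('e \<rightharpoonup> 'o) \<Rightarrow> 'e option"

definition is_prior :: "(('e::finite \<Rightarrow> 'o::finite) \<Rightarrow> real) \<Rightarrow> bool" where
  "is_prior p \<longleftrightarrow> (\<forall>\<phi>. p \<phi> \<ge> 0) \<and> (\<Sum>\<phi>\<in>UNIV. p \<phi>) = 1"

definition support :: "(('e \<Rightarrow> 'o) \<Rightarrow> real) \<Rightarrow> ('e \<Rightarrow> 'o) set" where
  "support p = {\<phi>. p \<phi> > 0}"

definition compat :: "('e \<Rightarrow> 'o) \<Rightarrow> ('e \<rightharpoonup> 'o) \<Rightarrow> bool" where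
  "compat \<phi> \<psi> \<longleftrightarrow> (\<forall>e\<in>dom \<psi>. \<psi> e = Some (\<phi> e))"

definition prob :: "(('e::finite \<Rightarrow> 'o::finite) \<Rightarrow> real) \<Rightarrow> ('e \<rightharpoonup> 'o) \<Rightarrow> real" where
  "prob p \<psi> = (\<Sum>\<phi>\<in>{\<phi>. compat \<phi> \<psi>}. p \<phi>)"

definition cond_prob :: "(('e::finite \<Rightarrow> 'o::finite) \<Rightarrow> real) \<Rightarrow> ('e \<Rightarrow> 'o) \<Rightarrow> ('e \<rightharpoonup> 'o) \<Rightarrow> real" where
  "cond_prob p \<phi> \<psi> = (if compat \<phi> \<psi> then p \<phi> / prob p \<psi> else 0)"

definition cond_exp :: "(('e::finite \<Rightarrow> 'o::finite) \<Rightarrow> real) \<Rightarrow> ('e, 'o) utility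
    \<Rightarrow> 'e set \<Rightarrow> ('e \<rightharpoonup> 'o) \<Rightarrow> real" where
  "cond_exp p f S \<psi> = (\<Sum>\<phi>\<in>UNIV. cond_prob p \<phi> \<psi> * f S \<phi>)"

definition outcomes :: "(('e::finite \<Rightarrow> 'o::finite) \<Rightarrow> real) \<Rightarrow> 'e \<Rightarrow> ('e \<rightharpoonup> 'o) \<Rightarrow> 'o set" where
  "outcomes p e \<psi> = {s. \<exists>\<phi>. cond_prob p \<phi> \<psi> > 0 \<and> \<phi> e = s}"

definition wc_gain :: "(('e::finite \<Rightarrow> 'o::finite) \<Rightarrow> real) \<Rightarrow> ('e, 'o) utility
    \<Rightarrow> 'e \<Rightarrow> ('e \<rightharpoonup> 'o) \<Rightarrow> real" where
  "wc_gain p f e \<psi> = Min ((\<lambda>s. cond_exp p f (dom \<psi> \<union> {e}) (\<psi>(e \<mapsto> s)) - cond_exp p f (dom \<psi>) \<psi>)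
                            ` outcomes p e \<psi>)"

definition wc_submodular :: "(('e::finite \<Rightarrow> 'o::finite) \<Rightarrow> real) \<Rightarrow> ('e, 'o) utility \<Rightarrow> bool" where
  "wc_submodular p f \<longleftrightarrow> (\<forall>\<psi> \<psi>' e. prob p \<psi> > 0 \<longrightarrow> prob p \<psi>' > 0 \<longrightarrow> \<psi> \<subseteq>\<^sub>m \<psi>' \<longrightarrow>
      e \<notin> dom \<psi>' \<longrightarrow> wc_gain p f e \<psi> \<ge> wc_gain p f e \<psi>')"

definition wc_monotone :: "(('e::finite \<Rightarrow> 'o::finite) \<Rightarrow> real) \<Rightarrow> ('e, 'o) utility \<Rightarrow> bool" where
  "wc_monotone p f \<longleftrightarrow> (\<forall>\<psi> e. prob p \<psi> > 0 \<longrightarrow> e \<notin> dom \<psi> \<longrightarrow> wc_gain p f e \<psi> \<ge> 0)"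

definition minimal_dependency :: "(('e::finite \<Rightarrow> 'o::finite) \<Rightarrow> real) \<Rightarrow> ('e, 'o) utility \<Rightarrow> bool" where
  "minimal_dependency p f \<longleftrightarrow> (\<forall>\<psi> \<phi>. prob p \<psi> > 0 \<longrightarrow> \<phi> \<in> support p \<longrightarrow> compat \<phi> \<psi> \<longrightarrow>
      cond_exp p f (dom \<psi>) \<psi> = f (dom \<psi>) \<phi>)"

definition pointwise_monotone :: "(('e \<Rightarrow> 'o) \<Rightarrow> real) \<Rightarrow> ('e, 'o) utility \<Rightarrow> bool" where
  "pointwise_monotone p f \<longleftrightarrow> (\<forall>\<phi>\<in>support p. \<forall>A B. A \<subseteq> B \<longrightarrow> f A \<phi> \<le> f B \<phi>)"

definition pointwise_submodular :: "(('e \<Rightarrow> 'o) \<Rightarrow> real) \<Rightarrow> ('e, 'o) utility \<Rightarrow> bool" where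
  "pointwise_submodular p f \<longleftrightarrow> (\<forall>\<phi>\<in>support p. \<forall>A B e. A \<subseteq> B \<longrightarrow> e \<notin> B \<longrightarrow>
      f (insert e A) \<phi> - f A \<phi> \<ge> f (insert e B) \<phi> - f B \<phi>)"

text \<open>Selecting an already
  selected item is not a legal move and is treated as stopping.\<close>
definition policy_step :: "('e, 'o) policy \<Rightarrow> ('e \<Rightarrow> 'o) \<Rightarrow> ('e \<rightharpoonup> 'o) \<Rightarrow> ('e \<rightharpoonup> 'o)" where
  "policy_step \<pi> \<phi> \<psi> = (case \<pi> \<psi> of None \<Rightarrow> \<psi>
      | Some e \<Rightarrow> (if e \<in> dom \<psi> then \<psi> else \<psi>(e \<mapsto> \<phi> e)))"

text \<open>Since every effective step adds a new item, card UNIV steps suffice to reach termination.\<close>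
definition final_partial :: "('e::finite, 'o) policy \<Rightarrow> ('e \<Rightarrow> 'o) \<Rightarrow> ('e \<rightharpoonup> 'o)" where
  "final_partial \<pi> \<phi> = (policy_step \<pi> \<phi> ^^ card (UNIV :: 'e set)) Map.empty"

definition selected :: "('e::finite, 'o) policy \<Rightarrow> ('e \<Rightarrow> 'o) \<Rightarrow> 'e set" where
  "selected \<pi> \<phi> = dom (final_partial \<pi> \<phi>)"

definition wc_value :: "(('e::finite \<Rightarrow> 'o::finite) \<Rightarrow> real) \<Rightarrow> ('e, 'o) utility \<Rightarrow> ('e, 'o) policy \<Rightarrow> real" where
  "wc_value p f \<pi> = Min ((\<lambda>\<phi>. f (selected \<pi> \<phi>) \<phi>) ` support p)"

definition card_feasible :: "(('e::finite \<Rightarrow> 'o::finite) \<Rightarrow> real) \<Rightarrow> nat \<Rightarrow> ('e, 'o) policy \<Rightarrow> bool" where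
  "card_feasible p k \<pi> \<longleftrightarrow> (\<forall>\<phi>\<in>support p. card (selected \<pi> \<phi>) \<le> k)"

definition wc_optimal :: "(('e::finite \<Rightarrow> 'o::finite) \<Rightarrow> real) \<Rightarrow> ('e, 'o) utility \<Rightarrow> nat \<Rightarrow> ('e, 'o) policy \<Rightarrow> bool" where
  "wc_optimal p f k \<pi> \<longleftrightarrow> card_feasible p k \<pi> \<and>
     (\<forall>\<pi>'. card_feasible p k \<pi>' \<longrightarrow> wc_value p f \<pi>' \<le> wc_value p f \<pi>)"

definition wc_greedy :: "(('e::finite \<Rightarrow> 'o::finite) \<Rightarrow> real) \<Rightarrow> ('e, 'o) utility \<Rightarrow> nat \<Rightarrow> ('e, 'o) policy \<Rightarrow> bool" where
  "wc_greedy p f k \<pi> \<longleftrightarrow> (\<forall>\<psi>. prob p \<psi> > 0 \<longrightarrow>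
     (if card (dom \<psi>) < k
      then (\<exists>e. \<pi> \<psi> = Some e \<and> e \<notin> dom \<psi> \<and> (\<forall>e'. e' \<notin> dom \<psi> \<longrightarrow> wc_gain p f e' \<psi> \<le> wc_gain p f e \<psi>))
      else \<pi> \<psi> = None))"

datatype item = e1 | e2 | e3
datatype state = o1 | o2

lemma UNIV_item: "(UNIV :: item set) = {e1, e2, e3}"
  using item.exhaust by auto

lemma UNIV_state: "(UNIV :: state set) = {o1, o2}"
  using state.exhaust by auto

instance item :: finite
  by standard (simp add: UNIV_item)

instance state :: finite
  by standard (simp add: UNIV_state)

definition ex_real :: "item \<Rightarrow> (item \<Rightarrow> state)" where
  "ex_real i = (\<lambda>e. if e = i then o1 else o2)"

definition indic :: "bool \<Rightarrow> real" where
  "indic b = (if b then 1 else 0)"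

definition ex_utility :: "real \<Rightarrow> (item, state) utility" where
  "ex_utility \<epsilon> S \<phi> = \<epsilon> * indic (e1 \<in> S) + (\<Sum>i\<in>{e2, e3}. indic (i \<in> S) * indic (\<phi> i = o2))"

end

theory Submission
  imports Defs
begin

(* The utility is local: f(S,\<phi>) only looks at \<phi> on S.  Hence conditional expectations on an
   observed partial realization are exact values, minimal dependency is automatic, and the
   worst-case gain of an item is the minimum of its pointwise marginal gains over the realizations
   still possible.  Before anything is observed e2 and e3 may be in state o1, so their worst-case
   gain is 0 and the greedy policy spends its first pick on e1 (gain \<epsilon>).  Observing e1 reveals
   nothing that separates \<phi>2 from \<phi>3, so the second pick is the same item under both, and under
   one of them that item is in state o1: the greedy value is \<epsilon>.  Selecting {e2, e3} blindly
   guarantees 1, and an adversary argument on the first two picks shows that no policy with two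
   picks guarantees more. *)

definition local_utility :: "('e, 'o) utility \<Rightarrow> bool" where
  "local_utility f \<longleftrightarrow> (\<forall>S \<phi> \<phi>'. (\<forall>e\<in>S. \<phi> e = \<phi>' e) \<longrightarrow> f S \<phi> = f S \<phi>')"

lemma local_utilityD: "local_utility f \<Longrightarrow> (\<And>e. e \<in> S \<Longrightarrow> \<phi> e = \<phi>' e) \<Longrightarrow> f S \<phi> = f S \<phi>'"
  unfolding local_utility_def by blast

lemma compat_agree: "compat \<phi> \<psi> \<Longrightarrow> compat \<phi>' \<psi> \<Longrightarrow> e \<in> dom \<psi> \<Longrightarrow> \<phi> e = \<phi>' e"
  by (auto simp: compat_def)

lemma compat_upd_self: "compat \<phi> \<psi> \<Longrightarrow> compat \<phi> (\<psi>(e \<mapsto> \<phi> e))"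
  by (auto simp: compat_def)

lemma prob_pos_if_compat:
  assumes nonneg: "\<forall>\<phi>. 0 \<le> p \<phi>" and "\<phi> \<in> support p" "compat \<phi> \<psi>"
  shows "0 < prob p \<psi>"
proof -
  have "p \<phi> \<le> prob p \<psi>"
    unfolding prob_def by (rule member_le_sum) (use assms in auto)
  with \<open>\<phi> \<in> support p\<close> show ?thesis by (simp add: support_def)
qed

lemma compat_support_exists:
  assumes nonneg: "\<forall>\<phi>. 0 \<le> p \<phi>" and "0 < prob p \<psi>"
  obtains \<phi> where "\<phi> \<in> support p" "compat \<phi> \<psi>"
proof -
  have "\<exists>\<phi>\<in>support p. compat \<phi> \<psi>"
  proof (rule ccontr)
    assume "\<not> ?thesis"
    then have "\<forall>\<phi>. compat \<phi> \<psi> \<longrightarrow> p \<phi> = 0"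
      using nonneg by (auto simp: support_def order.order_iff_strict)
    then have "prob p \<psi> = 0" unfolding prob_def by simp
    with \<open>0 < prob p \<psi>\<close> show False by simp
  qed
  with that show ?thesis by blast
qed

lemma outcomes_eq_image:
  assumes nonneg: "\<forall>\<phi>. 0 \<le> p \<phi>" and "0 < prob p \<psi>"
  shows "outcomes p e \<psi> = (\<lambda>\<phi>. \<phi> e) ` {\<phi> \<in> support p. compat \<phi> \<psi>}"
proof -
  have "0 < cond_prob p \<phi> \<psi> \<longleftrightarrow> \<phi> \<in> support p \<and> compat \<phi> \<psi>" for \<phi>
    using assms by (auto simp: cond_prob_def support_def zero_less_divide_iff)
  then show ?thesis unfolding outcomes_def by auto
qed

lemma cond_exp_eq_if_constant:
  assumes "0 < prob p \<psi>" and const: "\<And>\<phi>. compat \<phi> \<psi> \<Longrightarrow> f S \<phi> = c"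
  shows "cond_exp p f S \<psi> = c"
proof -
  have "cond_exp p f S \<psi> = (\<Sum>\<phi>\<in>UNIV. if compat \<phi> \<psi> then p \<phi> / prob p \<psi> * c else 0)"
    unfolding cond_exp_def cond_prob_def by (intro sum.cong) (auto simp: const)
  also have "\<dots> = (\<Sum>\<phi> \<in> {\<phi>. compat \<phi> \<psi>}. p \<phi> / prob p \<psi> * c)"
    by (subst sum.inter_filter[symmetric]) auto
  also have "\<dots> = prob p \<psi> / prob p \<psi> * c"
    unfolding prob_def by (simp add: sum_distrib_right[symmetric] sum_divide_distrib[symmetric])
  finally show ?thesis using assms(1) by simp
qed

lemma cond_exp_local:
  assumes "local_utility f" "0 < prob p \<psi>" "compat \<phi> \<psi>"
  shows "cond_exp p f (dom \<psi>) \<psi> = f (dom \<psi>) \<phi>"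
proof (rule cond_exp_eq_if_constant[OF assms(2)])
  fix \<phi>' assume "compat \<phi>' \<psi>"
  show "f (dom \<psi>) \<phi>' = f (dom \<psi>) \<phi>"
    using compat_agree[OF \<open>compat \<phi>' \<psi>\<close> assms(3)] by (rule local_utilityD[OF assms(1)])
qed

lemma minimal_dependency_if_local: "local_utility f \<Longrightarrow> minimal_dependency p f"
  unfolding minimal_dependency_def by (blast intro: cond_exp_local)

lemma wc_gain_local:
  assumes nonneg: "\<forall>\<phi>. 0 \<le> p \<phi>" and local: "local_utility f"
    and "0 < prob p \<psi>" "e \<notin> dom \<psi>"
  shows "wc_gain p f e \<psi> =
    Min ((\<lambda>\<phi>. f (insert e (dom \<psi>)) \<phi> - f (dom \<psi>) \<phi>) ` {\<phi> \<in> support p. compat \<phi> \<psi>})"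
proof -
  have marginal: "cond_exp p f (dom \<psi> \<union> {e}) (\<psi>(e \<mapsto> \<phi> e)) - cond_exp p f (dom \<psi>) \<psi>
      = f (insert e (dom \<psi>)) \<phi> - f (dom \<psi>) \<phi>"
    if "\<phi> \<in> support p" "compat \<phi> \<psi>" for \<phi>
  proof -
    have compat': "compat \<phi> (\<psi>(e \<mapsto> \<phi> e))" using that(2) by (rule compat_upd_self)
    then have "0 < prob p (\<psi>(e \<mapsto> \<phi> e))" by (rule prob_pos_if_compat[OF nonneg that(1)])
    from cond_exp_local[OF local this compat']
    have "cond_exp p f (dom \<psi> \<union> {e}) (\<psi>(e \<mapsto> \<phi> e)) = f (insert e (dom \<psi>)) \<phi>" by simp
    moreover have "cond_exp p f (dom \<psi>) \<psi> = f (dom \<psi>) \<phi>"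
      by (rule cond_exp_local[OF local \<open>0 < prob p \<psi>\<close> that(2)])
    ultimately show ?thesis by simp
  qed
  have "(\<lambda>s. cond_exp p f (dom \<psi> \<union> {e}) (\<psi>(e \<mapsto> s)) - cond_exp p f (dom \<psi>) \<psi>) ` outcomes p e \<psi>
      = (\<lambda>\<phi>. f (insert e (dom \<psi>)) \<phi> - f (dom \<psi>) \<phi>) ` {\<phi> \<in> support p. compat \<phi> \<psi>}"
    unfolding outcomes_eq_image[OF nonneg \<open>0 < prob p \<psi>\<close>] image_image
    by (rule image_cong[OF refl]) (use marginal in blast)
  then show ?thesis by (simp only: wc_gain_def)
qed

lemma wc_monotone_if_local_pointwise_monotone:
  assumes nonneg: "\<forall>\<phi>. 0 \<le> p \<phi>" and "local_utility f" "pointwise_monotone p f"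
  shows "wc_monotone p f"
  unfolding wc_monotone_def
proof (intro allI impI)
  fix \<psi> e assume pos: "0 < prob p \<psi>" and "e \<notin> dom \<psi>"
  obtain \<phi> where "\<phi> \<in> support p" "compat \<phi> \<psi>" using compat_support_exists[OF nonneg pos] .
  then have "{\<phi> \<in> support p. compat \<phi> \<psi>} \<noteq> {}" by blast
  moreover have "0 \<le> f (insert e (dom \<psi>)) \<phi>' - f (dom \<psi>) \<phi>'" if "\<phi>' \<in> support p" for \<phi>'
    using assms(3) that by (simp add: pointwise_monotone_def subset_insertI)
  ultimately show "0 \<le> wc_gain p f e \<psi>"
    unfolding wc_gain_local[OF nonneg assms(2) pos \<open>e \<notin> dom \<psi>\<close>]
    by (intro Min.boundedI) auto
qed

lemma wc_value_le: "\<phi> \<in> support p \<Longrightarrow> wc_value p f \<pi> \<le> f (selected \<pi> \<phi>) \<phi>"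
  unfolding wc_value_def by (rule Min_le) auto

lemma wc_greedy_exists:
  fixes p :: "('e::finite \<Rightarrow> 'o::finite) \<Rightarrow> real"
  assumes "k \<le> card (UNIV :: 'e set)"
  shows "\<exists>\<pi>. wc_greedy p f k \<pi>"
proof -
  define best where "best \<psi> e \<longleftrightarrow> e \<notin> dom \<psi> \<and> (\<forall>e'. e' \<notin> dom \<psi> \<longrightarrow> wc_gain p f e' \<psi> \<le> wc_gain p f e \<psi>)"
    for \<psi> :: "'e \<rightharpoonup> 'o" and e
  have "\<exists>e. best \<psi> e" if "card (dom \<psi>) < k" for \<psi>
  proof -
    have "- dom \<psi> \<noteq> {}"
    proof
      assume "- dom \<psi> = {}"
      then have "dom \<psi> = UNIV" by blast
      with that assms show False by simp
    qed
    then have "Max ((\<lambda>e. wc_gain p f e \<psi>) ` (- dom \<psi>)) \<in> (\<lambda>e. wc_gain p f e \<psi>) ` (- dom \<psi>)"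
      by (intro Max_in) auto
    then obtain e where "e \<in> - dom \<psi>" "wc_gain p f e \<psi> = Max ((\<lambda>e. wc_gain p f e \<psi>) ` (- dom \<psi>))"
      by (metis imageE)
    then have "best \<psi> e" by (auto simp: best_def intro!: Max_ge)
    then show ?thesis ..
  qed
  then have "best \<psi> (SOME e. best \<psi> e)" if "card (dom \<psi>) < k" for \<psi>
    using that by (blast intro: someI_ex)
  then have "wc_greedy p f k (\<lambda>\<psi>. if card (dom \<psi>) < k then Some (SOME e. best \<psi> e) else None)"
    unfolding wc_greedy_def best_def by simp
  then show ?thesis by blast
qed

text \<open>With three items every run has terminated after three steps.\<close>

lemma selected_item:
  fixes \<pi> :: "(item, state) policy"
  shows "selected \<pi> \<phi> = dom (policy_step \<pi> \<phi> (policy_step \<pi> \<phi> (policy_step \<pi> \<phi> Map.empty)))"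
proof -
  have "card (UNIV :: item set) = 3" by (simp add: UNIV_item)
  then show ?thesis by (simp add: selected_def final_partial_def numeral_3_eq_3)
qed

lemma dom_policy_step: "dom \<psi> \<subseteq> dom (policy_step \<pi> \<phi> \<psi>)"
  by (auto simp: policy_step_def split: option.splits)

lemma policy_step_Some: "\<pi> \<psi> = Some e \<Longrightarrow> e \<notin> dom \<psi> \<Longrightarrow> policy_step \<pi> \<phi> \<psi> = \<psi>(e \<mapsto> \<phi> e)"
  by (simp add: policy_step_def)

lemma policy_step_stay: "\<pi> \<psi> = None \<or> (\<exists>e\<in>dom \<psi>. \<pi> \<psi> = Some e) \<Longrightarrow> policy_step \<pi> \<phi> \<psi> = \<psi>"
  by (auto simp: policy_step_def)

definition ex_prior :: "(item \<Rightarrow> state) \<Rightarrow> real" where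
  "ex_prior \<phi> = (if \<phi> \<in> {ex_real e1, ex_real e2, ex_real e3} then 1/3 else 0)"

lemma ex_real_apply: "ex_real i e = (if e = i then o1 else o2)"
  by (simp add: ex_real_def)

lemma ex_real_distinct: "ex_real e1 \<noteq> ex_real e2" "ex_real e1 \<noteq> ex_real e3" "ex_real e2 \<noteq> ex_real e3"
  by (auto simp: ex_real_def fun_eq_iff)

lemma ex_prior_nonneg: "\<forall>\<phi>. 0 \<le> ex_prior \<phi>"
  by (simp add: ex_prior_def)

lemma support_ex_prior: "support ex_prior = {ex_real e1, ex_real e2, ex_real e3}"
  by (auto simp: support_def ex_prior_def)

lemma is_prior_ex_prior: "is_prior ex_prior"
proof -
  have "(\<Sum>\<phi>\<in>UNIV. ex_prior \<phi>) = (\<Sum>\<phi>\<in>UNIV \<inter> {ex_real e1, ex_real e2, ex_real e3}. 1/3)"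
    unfolding ex_prior_def by (rule sum.inter_restrict[symmetric]) simp
  also have "\<dots> = 1" using ex_real_distinct by simp
  finally show ?thesis by (simp add: is_prior_def ex_prior_nonneg)
qed

lemma ex_utility_eq:
  "ex_utility \<epsilon> S \<phi> = \<epsilon> * indic (e1 \<in> S) + indic (e2 \<in> S) * indic (\<phi> e2 = o2)
     + indic (e3 \<in> S) * indic (\<phi> e3 = o2)"
  by (simp add: ex_utility_def)

lemma local_ex_utility: "local_utility (ex_utility \<epsilon>)"
  unfolding local_utility_def ex_utility_eq indic_def by auto

lemma ex_utility_marginal:
  "e \<notin> S \<Longrightarrow> ex_utility \<epsilon> (insert e S) \<phi> - ex_utility \<epsilon> S \<phi> = (if e = e1 then \<epsilon> else indic (\<phi> e = o2))"
  by (cases e) (auto simp: ex_utility_eq indic_def)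

lemma pointwise_monotone_ex_utility: "0 < \<epsilon> \<Longrightarrow> pointwise_monotone p (ex_utility \<epsilon>)"
  by (auto simp: pointwise_monotone_def ex_utility_eq indic_def)

lemma pointwise_submodular_ex_utility: "pointwise_submodular p (ex_utility \<epsilon>)"
  unfolding pointwise_submodular_def
proof (intro ballI allI impI)
  fix \<phi> :: "item \<Rightarrow> state" and A B :: "item set" and e :: item
  assume "A \<subseteq> B" "e \<notin> B"
  then have "e \<notin> A" by blast
  with \<open>e \<notin> B\<close> show "ex_utility \<epsilon> (insert e B) \<phi> - ex_utility \<epsilon> B \<phi>
      \<le> ex_utility \<epsilon> (insert e A) \<phi> - ex_utility \<epsilon> A \<phi>"
    by (simp add: ex_utility_marginal)
qed

lemma wc_gain_ex_utility:
  assumes "0 < prob ex_prior \<psi>" "e \<notin> dom \<psi>"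
  shows "wc_gain ex_prior (ex_utility \<epsilon>) e \<psi> =
    Min ((\<lambda>\<phi>. if e = e1 then \<epsilon> else indic (\<phi> e = o2)) ` {\<phi> \<in> support ex_prior. compat \<phi> \<psi>})"
  by (simp add: wc_gain_local[OF ex_prior_nonneg local_ex_utility assms] ex_utility_marginal assms(2))

lemma prob_ex_prior_pos: "\<phi> \<in> support ex_prior \<Longrightarrow> compat \<phi> \<psi> \<Longrightarrow> 0 < prob ex_prior \<psi>"
  by (rule prob_pos_if_compat[OF ex_prior_nonneg])

lemma wc_gain_ex_utility_empty: "wc_gain ex_prior (ex_utility \<epsilon>) e Map.empty = (if e = e1 then \<epsilon> else 0)"
proof -
  have "0 < prob ex_prior Map.empty"
    by (rule prob_ex_prior_pos[of "ex_real e1"]) (auto simp: support_ex_prior compat_def)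
  moreover have "{\<phi> \<in> support ex_prior. compat \<phi> Map.empty} = {ex_real e1, ex_real e2, ex_real e3}"
    unfolding support_ex_prior compat_def by blast
  ultimately show ?thesis
    by (cases e) (simp_all add: wc_gain_ex_utility indic_def ex_real_apply)
qed

text \<open>Once e3 is seen in state o1 only \<phi>3 remains, and e2 has become a sure gain.\<close>

lemma not_wc_submodular_ex: "\<not> wc_submodular ex_prior (ex_utility \<epsilon>)"
proof
  assume submod: "wc_submodular ex_prior (ex_utility \<epsilon>)"
  let ?\<psi> = "[e3 \<mapsto> o1] :: item \<rightharpoonup> state"
  have pos: "0 < prob ex_prior ?\<psi>"
    by (rule prob_ex_prior_pos[of "ex_real e3"]) (auto simp: support_ex_prior compat_def ex_real_apply)
  have "{\<phi> \<in> support ex_prior. compat \<phi> ?\<psi>} = {ex_real e3}"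
    by (auto simp: support_ex_prior compat_def ex_real_apply)
  then have "wc_gain ex_prior (ex_utility \<epsilon>) e2 ?\<psi> = 1"
    using pos by (simp add: wc_gain_ex_utility indic_def ex_real_apply)
  moreover have "wc_gain ex_prior (ex_utility \<epsilon>) e2 ?\<psi> \<le> wc_gain ex_prior (ex_utility \<epsilon>) e2 Map.empty"
    using submod pos prob_ex_prior_pos[of "ex_real e1" Map.empty]
    by (auto simp: wc_submodular_def support_ex_prior compat_def map_le_def)
  ultimately show False by (simp add: wc_gain_ex_utility_empty)
qed

lemma greedy_selected:
  assumes greedy: "wc_greedy ex_prior (ex_utility \<epsilon>) 2 \<pi>" and "0 < \<epsilon>"
    and \<phi>: "\<phi> \<in> support ex_prior"
  obtains x where "x \<noteq> e1" "\<pi> [e1 \<mapsto> \<phi> e1] = Some x" "selected \<pi> \<phi> = {e1, x}"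
proof -
  have greedy_at: "if card (dom \<psi>) < 2
      then \<exists>e. \<pi> \<psi> = Some e \<and> e \<notin> dom \<psi> \<and>
        (\<forall>e'. e' \<notin> dom \<psi> \<longrightarrow> wc_gain ex_prior (ex_utility \<epsilon>) e' \<psi> \<le> wc_gain ex_prior (ex_utility \<epsilon>) e \<psi>)
      else \<pi> \<psi> = None" if "compat \<phi> \<psi>" for \<psi>
    using greedy prob_ex_prior_pos[OF \<phi> that] by (simp add: wc_greedy_def)
  obtain a where a: "\<pi> Map.empty = Some a" "\<forall>e'. wc_gain ex_prior (ex_utility \<epsilon>) e' Map.empty
      \<le> wc_gain ex_prior (ex_utility \<epsilon>) a Map.empty"
    using greedy_at[of Map.empty] by (auto simp: compat_def)
  have "a = e1" using a(2)[rule_format, of e1] \<open>0 < \<epsilon>\<close>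
    by (auto simp: wc_gain_ex_utility_empty split: if_splits)
  define \<psi>1 where "\<psi>1 = [e1 \<mapsto> \<phi> e1]"
  obtain x where x: "\<pi> \<psi>1 = Some x" "x \<notin> dom \<psi>1"
    using greedy_at[of \<psi>1] by (auto simp: \<psi>1_def compat_def)
  define \<psi>2 where "\<psi>2 = \<psi>1(x \<mapsto> \<phi> x)"
  have "x \<noteq> e1" "dom \<psi>2 = {e1, x}" using x(2) by (auto simp: \<psi>1_def \<psi>2_def)
  then have "\<pi> \<psi>2 = None" using greedy_at[of \<psi>2] by (simp add: \<psi>1_def \<psi>2_def compat_def)
  then have "selected \<pi> \<phi> = dom \<psi>2"
    using a(1) x \<open>a = e1\<close> by (simp add: selected_item policy_step_Some policy_step_stay \<psi>1_def \<psi>2_def)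
  with that \<open>x \<noteq> e1\<close> x(1) \<open>dom \<psi>2 = {e1, x}\<close> show ?thesis by (simp add: \<psi>1_def)
qed

lemma greedy_value:
  assumes greedy: "wc_greedy ex_prior (ex_utility \<epsilon>) 2 \<pi>" and "0 < \<epsilon>"
  shows "wc_value ex_prior (ex_utility \<epsilon>) \<pi> = \<epsilon>"
proof (rule antisym)
  have "\<epsilon> \<le> ex_utility \<epsilon> (selected \<pi> \<phi>) \<phi>" if "\<phi> \<in> support ex_prior" for \<phi>
    using greedy_selected[OF assms that] \<open>0 < \<epsilon>\<close> by (auto simp: ex_utility_eq indic_def)
  then show "\<epsilon> \<le> wc_value ex_prior (ex_utility \<epsilon>) \<pi>"
    unfolding wc_value_def by (intro Min.boundedI) (auto simp: support_ex_prior)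
next
  have in_support: "ex_real e2 \<in> support ex_prior" "ex_real e3 \<in> support ex_prior"
    by (simp_all add: support_ex_prior)
  obtain x where x: "x \<noteq> e1" "\<pi> [e1 \<mapsto> o2] = Some x" "selected \<pi> (ex_real e2) = {e1, x}"
    using greedy_selected[OF assms in_support(1)] by (auto simp: ex_real_apply)
  obtain y where y: "\<pi> [e1 \<mapsto> o2] = Some y" "selected \<pi> (ex_real e3) = {e1, y}"
    using greedy_selected[OF assms in_support(2)] by (auto simp: ex_real_apply)
  have "x \<in> {e2, e3}" using x(1) by (cases x) auto
  moreover have "selected \<pi> (ex_real x) = {e1, x}" using \<open>x \<in> {e2, e3}\<close> x y by auto
  ultimately have "ex_utility \<epsilon> (selected \<pi> (ex_real x)) (ex_real x) = \<epsilon>"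
    by (auto simp: ex_utility_eq indic_def ex_real_apply)
  moreover have "ex_real x \<in> support ex_prior" using \<open>x \<in> {e2, e3}\<close> in_support by auto
  ultimately show "wc_value ex_prior (ex_utility \<epsilon>) \<pi> \<le> \<epsilon>"
    using wc_value_le by metis
qed

definition select_e2_e3 :: "(item, state) policy" where
  "select_e2_e3 \<psi> = (if e2 \<notin> dom \<psi> then Some e2 else if e3 \<notin> dom \<psi> then Some e3 else None)"

lemma selected_select_e2_e3: "selected select_e2_e3 \<phi> = {e2, e3}"
  by (simp add: selected_item policy_step_def select_e2_e3_def insert_commute)

lemma wc_value_select_e2_e3: "wc_value ex_prior (ex_utility \<epsilon>) select_e2_e3 = 1"
  by (simp add: wc_value_def support_ex_prior selected_select_e2_e3 ex_utility_eq indic_def ex_real_apply)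

text \<open>Under \<phi>2 (resp. \<phi>3) a selection of at most two items earns more than 1 only if it is
  {e1, e3} (resp. {e1, e2}).\<close>

lemma ex_utility_le_one:
  assumes "\<epsilon> < 1" "card S \<le> 2" "i \<in> {e2, e3}" "i \<in> S \<or> S \<subseteq> {e1, i}"
  shows "ex_utility \<epsilon> S (ex_real i) \<le> 1"
proof -
  have "\<not> {e1, e2, e3} \<subseteq> S"
    using card_mono[of S "{e1, e2, e3}"] \<open>card S \<le> 2\<close> by (cases "finite S") auto
  then show ?thesis using assms by (auto simp: ex_utility_eq indic_def ex_real_apply)
qed

lemma first_pick_selected:
  fixes \<pi> :: "(item, state) policy"
  shows "\<pi> Map.empty = Some a \<Longrightarrow> a \<in> selected \<pi> \<phi>"
  using dom_policy_step[of "policy_step \<pi> \<phi> Map.empty" \<pi> \<phi>]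
    dom_policy_step[of "policy_step \<pi> \<phi> (policy_step \<pi> \<phi> Map.empty)" \<pi> \<phi>]
  by (auto simp: selected_item policy_step_Some)

lemma second_pick_selected:
  fixes \<pi> :: "(item, state) policy"
  assumes "\<pi> Map.empty = Some a" "\<pi> [a \<mapsto> \<phi> a] = Some b"
  shows "b \<in> selected \<pi> \<phi>"
proof -
  have "b \<in> dom (policy_step \<pi> \<phi> [a \<mapsto> \<phi> a])"
    using assms(2) by (auto simp: policy_step_def)
  then show ?thesis
    using assms(1) dom_policy_step[of "policy_step \<pi> \<phi> [a \<mapsto> \<phi> a]" \<pi> \<phi>]
    by (auto simp: selected_item policy_step_Some)
qed

lemma selected_after_first_pick:
  fixes \<pi> :: "(item, state) policy"
  assumes "\<pi> Map.empty = Some a" "\<pi> [a \<mapsto> \<phi> a] \<in> {None, Some a}"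
  shows "selected \<pi> \<phi> = {a}"
  using assms by (auto simp: selected_item policy_step_Some policy_step_stay)

lemma feasible_wc_value_le_one:
  assumes feasible: "card_feasible ex_prior 2 \<pi>" and "\<epsilon> < 1"
  shows "wc_value ex_prior (ex_utility \<epsilon>) \<pi> \<le> 1"
proof -
  have le_one: "ex_utility \<epsilon> (selected \<pi> (ex_real i)) (ex_real i) \<le> 1"
    if "i \<in> {e2, e3}" "i \<in> selected \<pi> (ex_real i) \<or> selected \<pi> (ex_real i) \<subseteq> {e1, i}" for i
  proof (rule ex_utility_le_one[OF \<open>\<epsilon> < 1\<close> _ that])
    show "card (selected \<pi> (ex_real i)) \<le> 2"
      using feasible that(1) by (auto simp: card_feasible_def support_ex_prior)
  qed
  have "\<exists>i\<in>{e2, e3}. ex_utility \<epsilon> (selected \<pi> (ex_real i)) (ex_real i) \<le> 1"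
  proof -
    consider (stop) "\<pi> Map.empty = None" | (pick) i where "i \<in> {e2, e3}" "\<pi> Map.empty = Some i"
      | (pick_e1) "\<pi> Map.empty = Some e1"
    proof (cases "\<pi> Map.empty")
      case (Some a)
      with that(2,3) show ?thesis by (cases a) auto
    qed (use that(1) in simp)
    then show ?thesis
    proof cases
      case stop
      then have "selected \<pi> (ex_real e2) = {}" by (simp add: selected_item policy_step_stay)
      with le_one[of e2] show ?thesis by auto
    next
      case pick
      \<comment> \<open>the adversary answers o1 at the first pick\<close>
      from pick(2) have "i \<in> selected \<pi> (ex_real i)" by (rule first_pick_selected)
      with pick(1) le_one[of i] show ?thesis by auto
    next
      case pick_e1
      \<comment> \<open>e1 is in state o2 under both \<phi>2 and \<phi>3, so they see the same second pick\<close>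
      consider (pick2) i where "i \<in> {e2, e3}" "\<pi> [e1 \<mapsto> o2] = Some i"
        | (stop2) "\<pi> [e1 \<mapsto> o2] \<in> {None, Some e1}"
      proof (cases "\<pi> [e1 \<mapsto> o2]")
        case (Some b)
        with that show ?thesis by (cases b) auto
      qed (use that(2) in simp)
      then show ?thesis
      proof cases
        case pick2
        then have "\<pi> [e1 \<mapsto> ex_real i e1] = Some i" by (auto simp: ex_real_apply)
        with pick_e1 have "i \<in> selected \<pi> (ex_real i)" by (rule second_pick_selected)
        with pick2(1) le_one[of i] show ?thesis by auto
      next
        case stop2
        then have "\<pi> [e1 \<mapsto> ex_real e2 e1] \<in> {None, Some e1}" by (simp add: ex_real_apply)
        with pick_e1 have "selected \<pi> (ex_real e2) = {e1}" by (rule selected_after_first_pick)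
        with le_one[of e2] show ?thesis by auto
      qed
    qed
  qed
  then obtain i where i: "i \<in> {e2, e3}" "ex_utility \<epsilon> (selected \<pi> (ex_real i)) (ex_real i) \<le> 1" ..
  then have "ex_real i \<in> support ex_prior" by (auto simp: support_ex_prior)
  then have "wc_value ex_prior (ex_utility \<epsilon>) \<pi> \<le> ex_utility \<epsilon> (selected \<pi> (ex_real i)) (ex_real i)"
    by (rule wc_value_le)
  with i(2) show ?thesis by linarith
qed

theorem mainTheorem4:
  fixes \<epsilon> :: real
  assumes "0 < \<epsilon>" and "\<epsilon> < 1"
  shows "\<exists>p. is_prior p \<and> support p = {ex_real e1, ex_real e2, ex_real e3} \<and>
    pointwise_monotone p (ex_utility \<epsilon>) \<and> pointwise_submodular p (ex_utility \<epsilon>) \<and>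
    wc_monotone p (ex_utility \<epsilon>) \<and> minimal_dependency p (ex_utility \<epsilon>) \<and>
    \<not> wc_submodular p (ex_utility \<epsilon>) \<and>
    (\<exists>\<pi>. wc_greedy p (ex_utility \<epsilon>) 2 \<pi>) \<and>
    (\<forall>\<pi>. wc_greedy p (ex_utility \<epsilon>) 2 \<pi> \<longrightarrow> wc_value p (ex_utility \<epsilon>) \<pi> = \<epsilon>) \<and>
    (\<exists>\<pi>. wc_optimal p (ex_utility \<epsilon>) 2 \<pi> \<and> wc_value p (ex_utility \<epsilon>) \<pi> = 1)"
proof (intro exI[of _ ex_prior] conjI allI impI)
  show "pointwise_monotone ex_prior (ex_utility \<epsilon>)"
    using \<open>0 < \<epsilon>\<close> by (rule pointwise_monotone_ex_utility)
  then show "wc_monotone ex_prior (ex_utility \<epsilon>)"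
    by (rule wc_monotone_if_local_pointwise_monotone[OF ex_prior_nonneg local_ex_utility])
  show "\<exists>\<pi>. wc_greedy ex_prior (ex_utility \<epsilon>) 2 \<pi>"
    by (rule wc_greedy_exists) (simp add: UNIV_item)
  show "wc_value ex_prior (ex_utility \<epsilon>) \<pi> = \<epsilon>" if "wc_greedy ex_prior (ex_utility \<epsilon>) 2 \<pi>" for \<pi>
    using that \<open>0 < \<epsilon>\<close> by (rule greedy_value)
  have "card_feasible ex_prior 2 select_e2_e3"
    by (simp add: card_feasible_def selected_select_e2_e3)
  then show "\<exists>\<pi>. wc_optimal ex_prior (ex_utility \<epsilon>) 2 \<pi> \<and> wc_value ex_prior (ex_utility \<epsilon>) \<pi> = 1"
    using feasible_wc_value_le_one \<open>\<epsilon> < 1\<close> wc_value_select_e2_e3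
    by (auto simp: wc_optimal_def)
qed (simp_all add: is_prior_ex_prior support_ex_prior pointwise_submodular_ex_utility
       minimal_dependency_if_local local_ex_utility not_wc_submodular_ex)

end
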